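(* Let $S$ be a round two-sphere in $\mathbb{HP}^1$ and $Q^2_S=\mathbb{P}(\{[S],[Sj]\}^{\perp})\cap Q^4$, where $[S],[Sj]$ are homogeneous representatives of the points of $Q^4$ corresponding to the two conformal structures on $S$. Then the real structure $j$ of $Q^4$ restricts to a real structure $\{j,Q^2_S\}$, and the two-sphere $S$, as a subset of $S^4\subset Q^4$, is exactly the real set of $\{j,Q^2_S\}$, namely the points $[a\wedge aj]$ with $[a]$ on the twistor lift $S\subset\mathbb{CP}^3$.
   Context: $\mathbb{H}^2$ (right $\mathbb{H}$-vector space) is identified with $\mathbb{C}^4$ by restricting scalars to $\mathbb{C}=\mathrm{span}_{\mathbb{R}}\{1,i\}$; right multiplication by $j$ is $\mathbb{C}$-antilinear. $\mathbb{CP}^3=\mathbb{P}(\mathbb{C}^4)$, $\mathbb{HP}^1=\{v\mathbb{H}\}\cong S^4$. $Q^4=\{[\alpha]\in\mathbb{P}(\Lambda^2\mathbb{C}^4):\alpha\wedge\alpha=0\}$, $[v\wedge w]$ corresponding to the projective line through $[v],[w]$; $\perp$ is with respect to $(\alpha,\beta)\mapsto\alpha\wedge\beta\in\Lambda^4\mathbb{C}^4\cong\mathbb{C}$. The antilinear extension of $v\wedge w\mapsto vj\wedge wj$ induces a real structure (antiholomorphic involution) $j$ of $Q^4$ whose fixed points are the twistor fibres $[v\wedge vj]$; $v\mathbb{H}\mapsto[v\wedge vj]$ identifies $S^4$ with this real set. A round two-sphere with conformal structure is $\{l:Tl=l\}$ for some $T\in\mathrm{End}_{\mathbb{H}}(\mathbb{H}^2)$,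 $T^2=-1$; its twistor lift is the line $S=\mathbb{P}\{v:Tv=vi\}\subset\mathbb{CP}^3$, and $Sj$ is the lift with the opposite conformal structure. The real set of a real structure is its fixed point set. *)

theory Defs
  imports "HOL-Analysis.Analysis"
begin

text \<open>Model.  \<open>\<H>\<^sup>2\<close> with scalars restricted to \<open>\<complex> = span{1,i}\<close> is \<open>\<complex>\<^sup>4\<close>
  (type \<open>complex^4\<close>): a quaternion \<open>q = z + j w\<close> (z, w complex) is the pair (z, w),
  complex scalars acting on the right (= on the left, since \<complex> is commutative).
  Right multiplication by j is then \<open>(z,w) \<mapsto> (-conj w, conj z)\<close> in each coordinate.\<close>

definition qj :: "complex^4 \<Rightarrow> complex^4" where
  "qj v = vector [- cnj (v$2), cnj (v$1), - cnj (v$4), cnj (v$3)]"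

definition hline :: "complex^4 \<Rightarrow> (complex^4) set" where
  "hline v = {a *s v + b *s qj v | a b. True}"

text \<open>\<open>\<Lambda>\<^sup>2\<complex>\<^sup>4 \<cong> \<complex>\<^sup>6\<close> with ordered basis e12, e13, e14, e23, e24, e34.\<close>

definition wedge :: "complex^4 \<Rightarrow> complex^4 \<Rightarrow> complex^6" where
  "wedge v w = vector
     [v$1*w$2 - v$2*w$1, v$1*w$3 - v$3*w$1, v$1*w$4 - v$4*w$1,
      v$2*w$3 - v$3*w$2, v$2*w$4 - v$4*w$2, v$3*w$4 - v$4*w$3]"

text \<open>The pairing \<open>(\<alpha>,\<beta>) \<mapsto> \<alpha>\<and>\<beta> \<in> \<Lambda>\<^sup>4\<complex>\<^sup>4 \<cong> \<complex>\<close> (coefficient of e1234).\<close>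

definition wedge2 :: "complex^6 \<Rightarrow> complex^6 \<Rightarrow> complex" where
  "wedge2 a b = a$1*b$6 - a$2*b$5 + a$3*b$4 + a$4*b$3 - a$5*b$2 + a$6*b$1"

text \<open>The antilinear extension of \<open>v\<and>w \<mapsto> vj \<and> wj\<close>, written out in coordinates
  (qj e1 = e2, qj e2 = -e1, qj e3 = e4, qj e4 = -e3).\<close>

definition jhat :: "complex^6 \<Rightarrow> complex^6" where
  "jhat a = vector [cnj (a$1), cnj (a$5), - cnj (a$4), - cnj (a$3), cnj (a$2), cnj (a$6)]"

text \<open>Points of a complex projective space \<open>\<P>(V)\<close> are represented by the complex line
  through a nonzero vector (the set of its complex multiples, including 0).\<close>

definition cline :: "complex^'n \<Rightarrow> (complex^'n) set" where
  "cline x = {c *s x | c. True}"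

definition jP :: "(complex^6) set \<Rightarrow> (complex^6) set" where
  "jP P = jhat ` P"

text \<open>Twistor lift of the round sphere given by T: the subspace \<open>{v. Tv = vi}\<close>
  (its projectivisation is the line S in \<open>\<complex>\<P>\<^sup>3\<close>).\<close>

definition twistor_lift :: "complex^4^4 \<Rightarrow> (complex^4) set" where
  "twistor_lift T = {v. T *v v = \<i> *s v}"

text \<open>The point of \<open>Q\<^sup>4\<close> corresponding to a projective line \<open>\<P>(L)\<close>, \<open>L\<close> a 2-dimensional
  subspace of \<open>\<complex>\<^sup>4\<close>: the set of all \<open>u\<and>w\<close> with \<open>u, w \<in> L\<close> (a complex line in \<open>\<Lambda>\<^sup>2\<close>).\<close>

definition line_pt :: "(complex^4) set \<Rightarrow> (complex^6) set" where
  "line_pt L = {wedge u w | u w. u \<in> L \<and> w \<in> L}"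

end

theory Submission
  imports Defs
begin

text \<open>Let \<open>u, w\<close> be a basis of the twistor lift \<open>L = {v. Tv = vi}\<close>. Since \<open>T\<close> commutes
  with \<open>j\<close>, the vectors \<open>uj, wj\<close> lie in the \<open>-i\<close>-eigenspace, so \<open>u, w, uj, wj\<close> is a basis
  of \<open>\<complex>\<^sup>4\<close> in which \<open>[S] = [u\<and>w]\<close> and \<open>[Sj] = [uj\<and>wj]\<close> are complementary basis bivectors,
  and the pairing \<open>\<alpha>\<and>\<beta>\<close> is antidiagonal. Hence \<open>Q\<^sup>2\<^sub>S\<close> is cut out by the vanishing of the
  \<open>u\<and>w\<close>- and \<open>uj\<and>wj\<close>-coordinates, and \<open>j\<close> acts on the remaining coordinates
  \<open>[p\<^sub>1\<^sub>3 p\<^sub>1\<^sub>4; p\<^sub>2\<^sub>3 p\<^sub>2\<^sub>4]\<close> (of \<open>u\<and>uj, u\<and>wj, w\<and>uj, w\<and>wj\<close>) by conjugate transposition.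
  A real point of \<open>Q\<^sup>2\<^sub>S\<close> is thus a Hermitian matrix of rank one (\<open>\<alpha>\<and>\<alpha> = 0\<close> is its
  determinant), i.e. a multiple of \<open>(x, y)\<^sup>T(x, y)\<^sup>*\<close>, which is exactly \<open>a\<and>aj\<close> for
  \<open>a = xu + yw \<in> L\<close>. Finally a quaternionic line \<open>v\<H>\<close> is \<open>T\<close>-invariant iff it meets \<open>L\<close>.\<close>

lemma exhaust_6:
  fixes x :: 6
  shows "x = 1 \<or> x = 2 \<or> x = 3 \<or> x = 4 \<or> x = 5 \<or> x = 6"
proof (induct x)
  case (of_int z)
  then have "z = 0 \<or> z = 1 \<or> z = 2 \<or> z = 3 \<or> z = 4 \<or> z = 5" by fastforce
  then show ?case by (elim disjE) (simp_all add: eq_commute[of "of_int 0"])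
qed

lemma forall_6: "(\<forall>i::6. P i) \<longleftrightarrow> P 1 \<and> P 2 \<and> P 3 \<and> P 4 \<and> P 5 \<and> P 6"
  by (metis exhaust_6)

lemma vec4_eq_iff: "(x::'a^4) = y \<longleftrightarrow> x$1 = y$1 \<and> x$2 = y$2 \<and> x$3 = y$3 \<and> x$4 = y$4"
  by (simp add: vec_eq_iff forall_4)

lemma vec6_eq_iff:
  "(x::'a^6) = y \<longleftrightarrow> x$1 = y$1 \<and> x$2 = y$2 \<and> x$3 = y$3 \<and> x$4 = y$4 \<and> x$5 = y$5 \<and> x$6 = y$6"
  by (simp add: vec_eq_iff forall_6)

lemma vector_6 [simp]:
  "(vector [a,b,c,d,e,f] :: ('a::zero)^6)$1 = a"
  "(vector [a,b,c,d,e,f] :: ('a::zero)^6)$2 = b"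
  "(vector [a,b,c,d,e,f] :: ('a::zero)^6)$3 = c"
  "(vector [a,b,c,d,e,f] :: ('a::zero)^6)$4 = d"
  "(vector [a,b,c,d,e,f] :: ('a::zero)^6)$5 = e"
  "(vector [a,b,c,d,e,f] :: ('a::zero)^6)$6 = f"
  unfolding vector_def by simp_all

lemma vector_4 [simp]:
  "(vector [a,b,c,d] :: ('a::zero)^4)$1 = a"
  "(vector [a,b,c,d] :: ('a::zero)^4)$2 = b"
  "(vector [a,b,c,d] :: ('a::zero)^4)$3 = c"
  "(vector [a,b,c,d] :: ('a::zero)^4)$4 = d"
  unfolding vector_def by simp_all

lemma qj_component [simp]:
  "qj v $ 1 = - cnj (v$2)" "qj v $ 2 = cnj (v$1)" "qj v $ 3 = - cnj (v$4)" "qj v $ 4 = cnj (v$3)"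
  by (simp_all add: qj_def)

lemma jhat_component [simp]:
  "jhat a $ 1 = cnj (a$1)" "jhat a $ 2 = cnj (a$5)" "jhat a $ 3 = - cnj (a$4)"
  "jhat a $ 4 = - cnj (a$3)" "jhat a $ 5 = cnj (a$2)" "jhat a $ 6 = cnj (a$6)"
  by (simp_all add: jhat_def)

lemma wedge_component:
  "wedge v w $ 1 = v$1*w$2 - v$2*w$1" "wedge v w $ 2 = v$1*w$3 - v$3*w$1"
  "wedge v w $ 3 = v$1*w$4 - v$4*w$1" "wedge v w $ 4 = v$2*w$3 - v$3*w$2"
  "wedge v w $ 5 = v$2*w$4 - v$4*w$2" "wedge v w $ 6 = v$3*w$4 - v$4*w$3"
  by (simp_all add: wedge_def)

section \<open>Right multiplication by \<open>j\<close> and the exterior square\<close>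

lemma qj_add: "qj (x + y) = qj x + qj y"
  by (simp add: vec4_eq_iff)

lemma qj_scale: "qj (c *s x) = cnj c *s qj x"
  by (simp add: vec4_eq_iff)

lemma qj_qj: "qj (qj x) = - x"
  by (simp add: vec4_eq_iff)

lemma qj_zero [simp]: "qj 0 = 0"
  by (simp add: vec4_eq_iff)

lemma wedge_add_left: "wedge (x + y) z = wedge x z + wedge y z"
  by (simp add: vec6_eq_iff wedge_component algebra_simps)

lemma wedge_add_right: "wedge z (x + y) = wedge z x + wedge z y"
  by (simp add: vec6_eq_iff wedge_component algebra_simps)

lemma wedge_scale_left: "wedge (c *s x) y = c *s wedge x y"
  by (simp add: vec6_eq_iff wedge_component algebra_simps)

lemma wedge_scale_right: "wedge x (c *s y) = c *s wedge x y"
  by (simp add: vec6_eq_iff wedge_component algebra_simps)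

lemma wedge_commute: "wedge y x = - wedge x y"
  by (simp add: vec6_eq_iff wedge_component algebra_simps)

lemma wedge_self [simp]: "wedge x x = 0"
  by (simp add: vec6_eq_iff wedge_component)

lemma wedge_zero [simp]: "wedge 0 x = 0" "wedge x 0 = 0"
  by (simp_all add: vec6_eq_iff wedge_component)

lemmas wedge_bilinear =
  wedge_add_left wedge_add_right wedge_scale_left wedge_scale_right

lemma wedge_comb2: "wedge (a *s x + b *s y) (c *s x + d *s y) = (a*d - b*c) *s wedge x y"
  by (simp add: vec6_eq_iff wedge_component algebra_simps)

lemma mult_cnj_add_mult_cnj_eq_0_iff: "(a::complex) * cnj a + b * cnj b = 0 \<longleftrightarrow> a = 0 \<and> b = 0"
proof -
  have "a * cnj a + b * cnj b = complex_of_real ((cmod a)\<^sup>2 + (cmod b)\<^sup>2)"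
    by (simp only: of_real_add complex_norm_square)
  then show ?thesis
    by (simp only: of_real_eq_0_iff sum_power2_eq_zero_iff norm_eq_zero)
qed

lemma wedge_qj_eq_0_iff: "wedge a (qj a) = 0 \<longleftrightarrow> a = 0"
proof
  assume "wedge a (qj a) = 0"
  then have "a$1 * cnj (a$1) + a$2 * cnj (a$2) = 0" "a$3 * cnj (a$3) + a$4 * cnj (a$4) = 0"
    by (simp_all add: vec6_eq_iff wedge_component)
  then show "a = 0"
    by (simp add: vec4_eq_iff mult_cnj_add_mult_cnj_eq_0_iff)
qed simp

lemma wedge_qj_hline:
  "wedge (s *s v + t *s qj v) (qj (s *s v + t *s qj v)) = (s * cnj s + t * cnj t) *s wedge v (qj v)"
  by (simp add: vec6_eq_iff wedge_component algebra_simps)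

lemma jhat_wedge: "jhat (wedge x y) = wedge (qj x) (qj y)"
  by (simp add: vec6_eq_iff wedge_component algebra_simps)

lemma jhat_wedge_qj: "jhat (wedge a (qj b)) = wedge b (qj a)"
  by (simp add: vec6_eq_iff wedge_component algebra_simps)

lemma jhat_jhat: "jhat (jhat a) = a"
  by (simp add: vec6_eq_iff)

lemma jhat_scale: "jhat (c *s a) = cnj c *s jhat a"
  by (simp add: vec6_eq_iff)

lemma jhat_eq_0_iff: "jhat a = 0 \<longleftrightarrow> a = 0"
  by (metis jhat_jhat jhat_scale vector_smult_lzero complex_cnj_zero)

lemma wedge2_add_left: "wedge2 (a + b) c = wedge2 a c + wedge2 b c"
  by (simp add: wedge2_def algebra_simps)

lemma wedge2_add_right: "wedge2 c (a + b) = wedge2 c a + wedge2 c b"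
  by (simp add: wedge2_def algebra_simps)

lemma wedge2_scale_left: "wedge2 (k *s a) b = k * wedge2 a b"
  by (simp add: wedge2_def algebra_simps)

lemma wedge2_scale_right: "wedge2 a (k *s b) = k * wedge2 a b"
  by (simp add: wedge2_def algebra_simps)

lemmas wedge2_bilinear =
  wedge2_add_left wedge2_add_right wedge2_scale_left wedge2_scale_right

lemma wedge2_jhat: "wedge2 (jhat a) (jhat b) = cnj (wedge2 a b)"
  by (simp add: wedge2_def algebra_simps)

lemma wedge2_nondegenerate:
  assumes "\<And>\<beta>. wedge2 \<beta> \<alpha> = 0"
  shows "\<alpha> = 0"
  using assms[of "vector [1,0,0,0,0,0]"] assms[of "vector [0,1,0,0,0,0]"]
    assms[of "vector [0,0,1,0,0,0]"] assms[of "vector [0,0,0,1,0,0]"]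
    assms[of "vector [0,0,0,0,1,0]"] assms[of "vector [0,0,0,0,0,1]"]
  by (simp add: wedge2_def vec6_eq_iff)

lemma wedge2_wedge_common [simp]:
  "wedge2 (wedge x y) (wedge x z) = 0" "wedge2 (wedge x y) (wedge z x) = 0"
  "wedge2 (wedge y x) (wedge x z) = 0" "wedge2 (wedge y x) (wedge z x) = 0"
  by (simp_all add: wedge2_def wedge_component algebra_simps)

lemma wedge2_wedge_permute:
  "wedge2 (wedge a c) (wedge b d) = - wedge2 (wedge a b) (wedge c d)"
  "wedge2 (wedge a d) (wedge b c) = wedge2 (wedge a b) (wedge c d)"
  "wedge2 (wedge b c) (wedge a d) = wedge2 (wedge a b) (wedge c d)"
  "wedge2 (wedge b d) (wedge a c) = - wedge2 (wedge a b) (wedge c d)"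
  "wedge2 (wedge c d) (wedge a b) = wedge2 (wedge a b) (wedge c d)"
  by (simp_all add: wedge2_def wedge_component algebra_simps)

section \<open>Bivectors in a frame\<close>

definition wedge_comb :: "complex \<Rightarrow> complex \<Rightarrow> complex \<Rightarrow> complex \<Rightarrow> complex \<Rightarrow> complex \<Rightarrow>
    complex^4 \<Rightarrow> complex^4 \<Rightarrow> complex^4 \<Rightarrow> complex^4 \<Rightarrow> complex^6" where
  "wedge_comb p12 p13 p14 p23 p24 p34 a b c d =
     p12 *s wedge a b + p13 *s wedge a c + p14 *s wedge a d
     + p23 *s wedge b c + p24 *s wedge b d + p34 *s wedge c d"

lemma wedge_comb_add:
  "wedge_comb p12 p13 p14 p23 p24 p34 a b c d + wedge_comb q12 q13 q14 q23 q24 q34 a b c d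
   = wedge_comb (p12 + q12) (p13 + q13) (p14 + q14) (p23 + q23) (p24 + q24) (p34 + q34) a b c d"
  unfolding wedge_comb_def by (simp add: vec6_eq_iff algebra_simps)

lemma wedge_comb_scale:
  "k *s wedge_comb p12 p13 p14 p23 p24 p34 a b c d
   = wedge_comb (k * p12) (k * p13) (k * p14) (k * p23) (k * p24) (k * p34) a b c d"
  unfolding wedge_comb_def by (simp add: vec6_eq_iff algebra_simps)

lemma wedge_comb4:
  "wedge (x1 *s a + x2 *s b + x3 *s c + x4 *s d) (y1 *s a + y2 *s b + y3 *s c + y4 *s d)
   = wedge_comb (x1*y2 - x2*y1) (x1*y3 - x3*y1) (x1*y4 - x4*y1) (x2*y3 - x3*y2) (x2*y4 - x4*y2)
       (x3*y4 - x4*y3) a b c d"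
  unfolding wedge_comb_def
  by (simp only: wedge_bilinear wedge_self wedge_commute[of a b] wedge_commute[of a c]
      wedge_commute[of a d] wedge_commute[of b c] wedge_commute[of b d] wedge_commute[of c d])
    (simp add: vec6_eq_iff algebra_simps)

lemma wedge2_wedge_comb_wedge:
  fixes a b c d :: "complex^4"
  defines "D \<equiv> wedge2 (wedge a b) (wedge c d)"
  shows "wedge2 (wedge_comb p12 p13 p14 p23 p24 p34 a b c d) (wedge a b) = p34 * D"
    "wedge2 (wedge_comb p12 p13 p14 p23 p24 p34 a b c d) (wedge a c) = - p24 * D"
    "wedge2 (wedge_comb p12 p13 p14 p23 p24 p34 a b c d) (wedge a d) = p23 * D"
    "wedge2 (wedge_comb p12 p13 p14 p23 p24 p34 a b c d) (wedge b c) = p14 * D"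
    "wedge2 (wedge_comb p12 p13 p14 p23 p24 p34 a b c d) (wedge b d) = - p13 * D"
    "wedge2 (wedge_comb p12 p13 p14 p23 p24 p34 a b c d) (wedge c d) = p12 * D"
proof -
  have "wedge2 (wedge a c) (wedge b d) = - D" "wedge2 (wedge a d) (wedge b c) = D"
    "wedge2 (wedge b c) (wedge a d) = D" "wedge2 (wedge b d) (wedge a c) = - D"
    "wedge2 (wedge c d) (wedge a b) = D"
    unfolding D_def by (fact wedge2_wedge_permute)+
  then show "wedge2 (wedge_comb p12 p13 p14 p23 p24 p34 a b c d) (wedge a b) = p34 * D"
    "wedge2 (wedge_comb p12 p13 p14 p23 p24 p34 a b c d) (wedge a c) = - p24 * D"
    "wedge2 (wedge_comb p12 p13 p14 p23 p24 p34 a b c d) (wedge a d) = p23 * D"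
    "wedge2 (wedge_comb p12 p13 p14 p23 p24 p34 a b c d) (wedge b c) = p14 * D"
    "wedge2 (wedge_comb p12 p13 p14 p23 p24 p34 a b c d) (wedge b d) = - p13 * D"
    "wedge2 (wedge_comb p12 p13 p14 p23 p24 p34 a b c d) (wedge c d) = p12 * D"
    unfolding wedge_comb_def by (simp_all add: wedge2_bilinear flip: D_def)
qed

lemma wedge2_wedge_comb:
  "wedge2 (wedge_comb p12 p13 p14 p23 p24 p34 a b c d) (wedge_comb q12 q13 q14 q23 q24 q34 a b c d)
   = (p12*q34 - p13*q24 + p14*q23 + p23*q14 - p24*q13 + p34*q12) * wedge2 (wedge a b) (wedge c d)"
  unfolding wedge_comb_def[of q12]
  by (simp add: wedge2_bilinear wedge2_wedge_comb_wedge algebra_simps)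

lemma wedge_comb_inject:
  assumes "wedge2 (wedge a b) (wedge c d) \<noteq> 0"
    and "wedge_comb p12 p13 p14 p23 p24 p34 a b c d = wedge_comb q12 q13 q14 q23 q24 q34 a b c d"
  shows "p12 = q12 \<and> p13 = q13 \<and> p14 = q14 \<and> p23 = q23 \<and> p24 = q24 \<and> p34 = q34"
  using assms wedge2_wedge_comb_wedge[of p12 p13 p14 p23 p24 p34 a b c d]
    wedge2_wedge_comb_wedge[of q12 q13 q14 q23 q24 q34 a b c d]
  by auto

lemma wedge_comb_onto:
  assumes spans: "\<And>z. \<exists>x1 x2 x3 x4. z = x1 *s a + x2 *s b + x3 *s c + x4 *s d"
  obtains p12 p13 p14 p23 p24 p34 where "\<beta> = wedge_comb p12 p13 p14 p23 p24 p34 a b c d"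
proof -
  define R where "R = {\<gamma>. \<exists>p12 p13 p14 p23 p24 p34. \<gamma> = wedge_comb p12 p13 p14 p23 p24 p34 a b c d}"
  have wedge_R: "k *s wedge x y \<in> R" for k x y
  proof -
    obtain x1 x2 x3 x4 y1 y2 y3 y4 where x: "x = x1 *s a + x2 *s b + x3 *s c + x4 *s d"
      and y: "y = y1 *s a + y2 *s b + y3 *s c + y4 *s d"
      using spans[of x] spans[of y] by blast
    show ?thesis
      unfolding R_def x y wedge_comb4 wedge_comb_scale by blast
  qed
  have add_R: "\<gamma> + \<delta> \<in> R" if "\<gamma> \<in> R" "\<delta> \<in> R" for \<gamma> \<delta>
    using that unfolding R_def mem_Collect_eq by (metis wedge_comb_add)
  have "\<beta> = \<beta>$1 *s wedge (axis 1 1) (axis 2 1) + \<beta>$2 *s wedge (axis 1 1) (axis 3 1)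
      + \<beta>$3 *s wedge (axis 1 1) (axis 4 1) + \<beta>$4 *s wedge (axis 2 1) (axis 3 1)
      + \<beta>$5 *s wedge (axis 2 1) (axis 4 1) + \<beta>$6 *s wedge (axis 3 (1::complex)) (axis 4 1)"
    by (simp add: vec6_eq_iff wedge_component axis_def)
  also have "\<dots> \<in> R"
    by (intro add_R wedge_R)
  finally show thesis
    using that unfolding R_def by auto
qed

lemma jhat_wedge_comb_qj:
  "jhat (wedge_comb p12 p13 p14 p23 p24 p34 a b (qj a) (qj b))
   = wedge_comb (cnj p34) (cnj p13) (cnj p23) (cnj p14) (cnj p24) (cnj p12) a b (qj a) (qj b)"
  unfolding wedge_comb_def by (simp add: vec6_eq_iff wedge_component algebra_simps)

lemma wedge_qj_comb2:
  "wedge (x *s a + y *s b) (qj (x *s a + y *s b))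
   = wedge_comb 0 (x * cnj x) (x * cnj y) (y * cnj x) (y * cnj y) 0 a b (qj a) (qj b)"
  unfolding wedge_comb_def by (simp add: vec6_eq_iff wedge_component algebra_simps)

lemma rank_one_conj_symmetric:
  fixes p q r s C :: complex
  assumes "cnj p = C * p" "cnj r = C * q" "cnj q = C * r" "cnj s = C * s"
    and "p * s = q * r" and "\<not> (p = 0 \<and> q = 0 \<and> r = 0 \<and> s = 0)"
  obtains x y l where "l \<noteq> 0" "p = l * (x * cnj x)" "q = l * (x * cnj y)" "r = l * (y * cnj x)"
    "s = l * (y * cnj y)"
proof (cases "p = 0")
  case False
  then have "C \<noteq> 0" using assms(1) by auto
  have "q = p * cnj (r / p)"
    using False \<open>C \<noteq> 0\<close> assms(1,2) by (simp add: field_simps)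
  moreover have "s = p * ((r / p) * cnj (r / p))"
    using False \<open>C \<noteq> 0\<close> assms(1,2,5) by (simp add: field_simps)
  ultimately show thesis
    using that[of p 1 "r / p"] False by simp
next
  case True
  then have "q = 0" "r = 0"
    using assms(2,3,5) by auto
  then show thesis
    using that[of s 0 1] True assms(6) by simp
qed

lemma cline_scale:
  assumes "c \<noteq> 0"
  shows "cline (c *s a) = cline a"
  unfolding cline_def
proof (intro set_eqI iffI)
  fix x assume "x \<in> {d *s (c *s a) | d. True}"
  then show "x \<in> {d *s a | d. True}"
    by (auto simp: vector_smult_assoc)
next
  fix x assume "x \<in> {d *s a | d. True}"
  then obtain d where "x = d *s a" by blast
  then have "x = (d / c) *s (c *s a)"
    using assms by (simp add: vector_smult_assoc)
  then show "x \<in> {d *s (c *s a) | d. True}" by blast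
qed

lemma jP_cline: "jP (cline a) = cline (jhat a)"
  unfolding jP_def cline_def
proof (intro set_eqI iffI)
  fix x assume "x \<in> jhat ` {d *s a | d. True}"
  then show "x \<in> {d *s jhat a | d. True}"
    by (auto simp: jhat_scale)
next
  fix x assume "x \<in> {d *s jhat a | d. True}"
  then obtain d where "x = jhat (cnj d *s a)"
    by (auto simp: jhat_scale)
  then show "x \<in> jhat ` {d *s a | d. True}" by blast
qed

lemma jP_jP: "jP (jP P) = P"
  by (simp add: jP_def image_image jhat_jhat)

section \<open>Quaternionic complex structures\<close>

lemma subspace_eigenspace: "vec.subspace {v. (T::'a::field^'n^'n) *v v = c *s v}"
  by (auto simp: vec.subspace_def matrix_vector_right_distrib vector_scalar_commute
      vector_add_ldistrib vector_smult_assoc mult.commute)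

lemma dim_eigenspaces_le:
  fixes T :: "'a::field^'n^'n"
  assumes "c \<noteq> d"
  shows "vec.dim {v. T *v v = c *s v} + vec.dim {v. T *v v = d *s v} \<le> CARD('n)"
proof -
  have "{v. T *v v = c *s v} \<inter> {v. T *v v = d *s v} = {0}"
    using assms by auto
  then have "vec.dim {x + y |x y. x \<in> {v. T *v v = c *s v} \<and> y \<in> {v. T *v v = d *s v}}
      = vec.dim {v. T *v v = c *s v} + vec.dim {v. T *v v = d *s v}"
    using vec.dim_sums_Int[OF subspace_eigenspace[of T c] subspace_eigenspace[of T d]] by simp
  moreover have "vec.dim {x + y |x y. x \<in> {v. T *v v = c *s v} \<and> y \<in> {v. T *v v = d *s v}}
      \<le> CARD('n)"
    using vec.dim_subset_UNIV by (simp add: vec.dimension_def card_cart_basis)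
  ultimately show ?thesis by simp
qed

lemma independent_if_wedge_nonzero:
  assumes "wedge a b \<noteq> 0"
  shows "vec.independent {a, b}" "card {a, b} = 2"
proof -
  have "a \<notin> vec.span {b}"
    using assms by (auto simp: vec.span_singleton wedge_scale_left)
  moreover have "b \<noteq> 0" "a \<noteq> b"
    using assms by auto
  ultimately show "vec.independent {a, b}" "card {a, b} = 2"
    by (simp_all add: vec.independent_insert)
qed

locale quaternionic_complex_structure =
  fixes T :: "complex^4^4"
  assumes quaternionic_linear: "\<And>v. T *v qj v = qj (T *v v)"
    and square_eq_minus_one: "T ** T = - mat 1"
begin

lemma T_T: "T *v (T *v x) = - x"
proof -
  have "T *v (T *v x) = (- mat 1) *v x"
    by (simp add: matrix_vector_mul_assoc square_eq_minus_one)
  also have "\<dots> = - (mat 1 *v x)"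
    by (simp add: vec_eq_iff matrix_vector_mult_def sum_negf)
  finally show ?thesis by simp
qed

lemma qj_eigenvector: "T *v v = c *s v \<Longrightarrow> T *v qj v = cnj c *s qj v"
  by (simp add: quaternionic_linear qj_scale)

lemma eigen_decomposition:
  obtains p p' where "z = p + p'" "T *v p = \<i> *s p" "T *v p' = (- \<i>) *s p'"
proof
  show "z = (1/2) *s (z - \<i> *s (T *v z)) + (1/2) *s (z + \<i> *s (T *v z))"
    by (simp add: vec4_eq_iff algebra_simps)
  show "T *v ((1/2) *s (z - \<i> *s (T *v z))) = \<i> *s ((1/2) *s (z - \<i> *s (T *v z)))"
    by (simp add: vector_scalar_commute matrix_vector_mult_diff_distrib T_T vec4_eq_iff algebra_simps)
  show "T *v ((1/2) *s (z + \<i> *s (T *v z))) = (- \<i>) *s ((1/2) *s (z + \<i> *s (T *v z)))"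
    by (simp add: vector_scalar_commute matrix_vector_right_distrib T_T vec4_eq_iff algebra_simps)
qed

lemma hline_invariant_if_eigenvector:
  assumes a: "T *v a = \<i> *s a"
  shows "(\<lambda>x. T *v x) ` hline a = hline a"
proof -
  have Tqj: "T *v qj a = (- \<i>) *s qj a"
    using qj_eigenvector[OF a] by simp
  have T_comb: "T *v (s *s a + t *s qj a) = (\<i> * s) *s a + (- \<i> * t) *s qj a" for s t
    by (simp add: matrix_vector_right_distrib vector_scalar_commute a Tqj vec4_eq_iff algebra_simps)
  have T_inv: "T *v ((- \<i> * s) *s a + (\<i> * t) *s qj a) = s *s a + t *s qj a" for s t
    by (simp only: T_comb) (simp add: vec4_eq_iff)
  show ?thesis
    unfolding hline_def
  proof (intro set_eqI iffI)
    fix x assume "x \<in> (\<lambda>x. T *v x) ` {s *s a + t *s qj a | s t. True}"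
    then obtain s t where "x = T *v (s *s a + t *s qj a)" by blast
    then show "x \<in> {s *s a + t *s qj a | s t. True}"
      unfolding T_comb by blast
  next
    fix x assume "x \<in> {s *s a + t *s qj a | s t. True}"
    then obtain s t where "x = T *v ((- \<i> * s) *s a + (\<i> * t) *s qj a)"
      unfolding T_inv by blast
    then show "x \<in> (\<lambda>x. T *v x) ` {s *s a + t *s qj a | s t. True}" by blast
  qed
qed

lemma twistor_fibre_of_invariant_hline:
  assumes "v \<noteq> 0" and invariant: "(\<lambda>x. T *v x) ` hline v = hline v"
  obtains a where "a \<noteq> 0" "T *v a = \<i> *s a" "cline (wedge a (qj a)) = cline (wedge v (qj v))"
proof -
  have "v = 1 *s v + 0 *s qj v"
    by simp
  then have "v \<in> hline v"
    unfolding hline_def by blast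
  then obtain \<alpha> \<beta> where Tv: "T *v v = \<alpha> *s v + \<beta> *s qj v"
    using invariant unfolding hline_def by blast
  \<comment> \<open>the component of \<open>v\<close> in the \<open>i\<close>-eigenspace; if it vanishes, \<open>vj\<close> lies there instead\<close>
  define s t where "s = (1 - \<i> * \<alpha>) / 2" and "t = - \<i> * \<beta> / 2"
  define p where "p = s *s v + t *s qj v"
  have p_eq: "p = (1/2) *s (v - \<i> *s (T *v v))"
    by (simp add: p_def s_def t_def Tv vec4_eq_iff field_simps)
  have Tp: "T *v p = \<i> *s p"
    unfolding p_eq by (simp add: vector_scalar_commute matrix_vector_mult_diff_distrib T_T vec4_eq_iff algebra_simps)
  show thesis
  proof (cases "p = 0")
    case False
    then have "s * cnj s + t * cnj t \<noteq> 0"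
      by (auto simp: p_def mult_cnj_add_mult_cnj_eq_0_iff)
    then have "cline (wedge p (qj p)) = cline (wedge v (qj v))"
      unfolding p_def wedge_qj_hline by (rule cline_scale)
    then show thesis
      using that False Tp by blast
  next
    case True
    then have "T *v v = (- \<i>) *s v"
      using p_eq by (simp add: vec4_eq_iff algebra_simps)
    then have "T *v qj v = \<i> *s qj v"
      using qj_eigenvector[of v "- \<i>"] by simp
    moreover have "qj v \<noteq> 0"
      using \<open>v \<noteq> 0\<close> qj_qj by (metis neg_equal_0_iff_equal qj_zero)
    moreover have "wedge (qj v) (qj (qj v)) = wedge v (qj v)"
      by (simp add: vec6_eq_iff wedge_component)
    ultimately show thesis
      using that[of "qj v"] by simp
  qed
qed

lemma invariant_hline_fibres_eq:
  "{cline (wedge v (qj v)) | v. v \<noteq> 0 \<and> (\<lambda>x. T *v x) ` hline v = hline v}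
   = {cline (wedge a (qj a)) | a. a \<noteq> 0 \<and> a \<in> twistor_lift T}"
proof (intro set_eqI iffI)
  fix P assume "P \<in> {cline (wedge v (qj v)) | v. v \<noteq> 0 \<and> (\<lambda>x. T *v x) ` hline v = hline v}"
  then obtain v where "P = cline (wedge v (qj v))" "v \<noteq> 0" "(\<lambda>x. T *v x) ` hline v = hline v"
    by blast
  then obtain a where "a \<noteq> 0" "T *v a = \<i> *s a" "P = cline (wedge a (qj a))"
    using twistor_fibre_of_invariant_hline by metis
  then show "P \<in> {cline (wedge a (qj a)) | a. a \<noteq> 0 \<and> a \<in> twistor_lift T}"
    unfolding twistor_lift_def by blast
next
  fix P assume "P \<in> {cline (wedge a (qj a)) | a. a \<noteq> 0 \<and> a \<in> twistor_lift T}"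
  then show "P \<in> {cline (wedge v (qj v)) | v. v \<noteq> 0 \<and> (\<lambda>x. T *v x) ` hline v = hline v}"
    unfolding twistor_lift_def using hline_invariant_if_eigenvector by blast
qed

end

section \<open>The real structure on \<open>Q\<^sup>2\<^sub>S\<close>\<close>

locale twistor_frame = quaternionic_complex_structure +
  fixes u w :: "complex^4"
  assumes u_eigen: "T *v u = \<i> *s u" and w_eigen: "T *v w = \<i> *s w"
    and wedge_u_w_nonzero: "wedge u w \<noteq> 0"
begin

abbreviation frame_wedge ::
    "complex \<Rightarrow> complex \<Rightarrow> complex \<Rightarrow> complex \<Rightarrow> complex \<Rightarrow> complex \<Rightarrow> complex^6" where
  "frame_wedge p12 p13 p14 p23 p24 p34 \<equiv> wedge_comb p12 p13 p14 p23 p24 p34 u w (qj u) (qj w)"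

abbreviation frame_volume :: complex where
  "frame_volume \<equiv> wedge2 (wedge u w) (wedge (qj u) (qj w))"

lemma twistor_lift_eq_span: "twistor_lift T = vec.span {u, w}"
proof
  show "vec.span {u, w} \<subseteq> twistor_lift T"
    unfolding twistor_lift_def
    by (rule vec.span_minimal) (use u_eigen w_eigen subspace_eigenspace in auto)
  \<comment> \<open>\<open>uj, wj\<close> are independent in the \<open>-i\<close>-eigenspace, which leaves room for at most two dimensions\<close>
  have "wedge (qj u) (qj w) \<noteq> 0"
    using wedge_u_w_nonzero by (simp flip: jhat_wedge add: jhat_eq_0_iff)
  then have "card {qj u, qj w} \<le> vec.dim {v. T *v v = (- \<i>) *s v}"
    using independent_if_wedge_nonzero qj_eigenvector[OF u_eigen] qj_eigenvector[OF w_eigen]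
    by (intro vec.independent_card_le_dim) auto
  then have "vec.dim (twistor_lift T) \<le> card {u, w}"
    using dim_eigenspaces_le[of "\<i>" "- \<i>" T] independent_if_wedge_nonzero
      \<open>wedge (qj u) (qj w) \<noteq> 0\<close> wedge_u_w_nonzero
    unfolding twistor_lift_def by simp
  then show "twistor_lift T \<subseteq> vec.span {u, w}"
    using u_eigen w_eigen independent_if_wedge_nonzero[OF wedge_u_w_nonzero]
    by (intro vec.card_ge_dim_independent) (auto simp: twistor_lift_def)
qed

lemma twistor_lift_iff: "x \<in> twistor_lift T \<longleftrightarrow> (\<exists>a b. x = a *s u + b *s w)"
proof -
  have "(\<exists>k l. x - k *s u = l *s w) \<longleftrightarrow> (\<exists>a b. x = a *s u + b *s w)"
    by (metis diff_eq_eq add.commute add_diff_cancel)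
  then show ?thesis
    unfolding twistor_lift_eq_span by (auto simp: vec.span_insert vec.span_singleton)
qed

lemma frame_spans: "\<exists>a b c d. z = a *s u + b *s w + c *s qj u + d *s qj w"
proof -
  obtain p p' where z: "z = p + p'" and p: "T *v p = \<i> *s p" and p': "T *v p' = (- \<i>) *s p'"
    by (rule eigen_decomposition)
  obtain a b where p_comb: "p = a *s u + b *s w"
    using p twistor_lift_iff unfolding twistor_lift_def by blast
  obtain c d where qj_p': "qj p' = c *s u + d *s w"
    using qj_eigenvector[OF p'] twistor_lift_iff unfolding twistor_lift_def by auto
  have "p' = - qj (qj p')"
    by (simp add: qj_qj)
  also have "\<dots> = (- cnj c) *s qj u + (- cnj d) *s qj w"
    unfolding qj_p' by (simp add: qj_add qj_scale vec4_eq_iff)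
  finally have "z = a *s u + b *s w + (- cnj c) *s qj u + (- cnj d) *s qj w"
    using z p_comb by (simp add: add.assoc)
  then show ?thesis by blast
qed

lemma frame_wedge_onto:
  obtains p12 p13 p14 p23 p24 p34 where "\<beta> = frame_wedge p12 p13 p14 p23 p24 p34"
  using wedge_comb_onto frame_spans by blast

lemma frame_volume_nonzero: "frame_volume \<noteq> 0"
proof
  assume "frame_volume = 0"
  have "wedge2 \<beta> (wedge u w) = 0" for \<beta>
  proof -
    obtain p12 p13 p14 p23 p24 p34 where "\<beta> = frame_wedge p12 p13 p14 p23 p24 p34"
      by (rule frame_wedge_onto)
    then show ?thesis
      using \<open>frame_volume = 0\<close> by (simp add: wedge2_wedge_comb_wedge)
  qed
  then have "wedge u w = 0"
    by (rule wedge2_nondegenerate)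
  with wedge_u_w_nonzero show False ..
qed

lemma real_point_is_twistor_fibre:
  assumes "\<alpha> \<noteq> 0" "wedge2 \<alpha> \<alpha> = 0" "wedge2 \<alpha> (wedge u w) = 0"
    "wedge2 \<alpha> (wedge (qj u) (qj w)) = 0" "jhat \<alpha> = C *s \<alpha>"
  obtains a l where "a \<in> twistor_lift T" "l \<noteq> 0" "\<alpha> = l *s wedge a (qj a)"
proof -
  obtain p12 p13 p14 p23 p24 p34 where "\<alpha> = frame_wedge p12 p13 p14 p23 p24 p34"
    by (rule frame_wedge_onto)
  moreover have "p34 = 0" "p12 = 0"
    using assms(3,4) frame_volume_nonzero by (simp_all add: \<open>\<alpha> = _\<close> wedge2_wedge_comb_wedge)
  ultimately have \<alpha>: "\<alpha> = frame_wedge 0 p13 p14 p23 p24 0"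
    by simp
  have "frame_wedge 0 (cnj p13) (cnj p23) (cnj p14) (cnj p24) 0
      = frame_wedge 0 (C * p13) (C * p14) (C * p23) (C * p24) 0"
    using assms(5) by (simp add: \<alpha> jhat_wedge_comb_qj wedge_comb_scale)
  then have "cnj p13 = C * p13" "cnj p23 = C * p14" "cnj p14 = C * p23" "cnj p24 = C * p24"
    using wedge_comb_inject[OF frame_volume_nonzero] by blast+
  moreover have "p13 * p24 = p14 * p23"
    using assms(2) frame_volume_nonzero by (simp add: \<alpha> wedge2_wedge_comb)
  moreover have "\<not> (p13 = 0 \<and> p14 = 0 \<and> p23 = 0 \<and> p24 = 0)"
    using assms(1) by (auto simp: \<alpha> wedge_comb_def)
  ultimately obtain x y l where "l \<noteq> 0" "p13 = l * (x * cnj x)" "p14 = l * (x * cnj y)"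
    "p23 = l * (y * cnj x)" "p24 = l * (y * cnj y)"
    by (rule rank_one_conj_symmetric)
  then have "\<alpha> = l *s wedge (x *s u + y *s w) (qj (x *s u + y *s w))"
    by (simp add: \<alpha> wedge_qj_comb2 wedge_comb_scale)
  moreover have "x *s u + y *s w \<in> twistor_lift T"
    using twistor_lift_iff by blast
  ultimately show thesis
    using that \<open>l \<noteq> 0\<close> by blast
qed

definition quadric_section :: "(complex^6) set set" where
  "quadric_section = {cline \<alpha> | \<alpha>. \<alpha> \<noteq> 0 \<and> wedge2 \<alpha> \<alpha> = 0 \<and> wedge2 \<alpha> (wedge u w) = 0
     \<and> wedge2 \<alpha> (wedge (qj u) (qj w)) = 0}"

lemma jP_quadric_section:
  assumes "P \<in> quadric_section"
  shows "jP P \<in> quadric_section"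
proof -
  obtain \<alpha> where P: "P = cline \<alpha>" and \<alpha>: "\<alpha> \<noteq> 0" "wedge2 \<alpha> \<alpha> = 0"
    "wedge2 \<alpha> (wedge u w) = 0" "wedge2 \<alpha> (wedge (qj u) (qj w)) = 0"
    using assms unfolding quadric_section_def by blast
  have "jhat (wedge u w) = wedge (qj u) (qj w)"
    by (rule jhat_wedge)
  then have "jhat (wedge (qj u) (qj w)) = wedge u w"
    by (metis jhat_jhat)
  then have "wedge2 (jhat \<alpha>) (wedge u w) = cnj (wedge2 \<alpha> (wedge (qj u) (qj w)))"
    "wedge2 (jhat \<alpha>) (wedge (qj u) (qj w)) = cnj (wedge2 \<alpha> (wedge u w))"
    using wedge2_jhat[of \<alpha>] \<open>jhat (wedge u w) = _\<close> by metis+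
  then have "jhat \<alpha> \<noteq> 0" "wedge2 (jhat \<alpha>) (jhat \<alpha>) = 0"
    "wedge2 (jhat \<alpha>) (wedge u w) = 0" "wedge2 (jhat \<alpha>) (wedge (qj u) (qj w)) = 0"
    using \<alpha> by (simp_all add: jhat_eq_0_iff wedge2_jhat)
  then show ?thesis
    unfolding P jP_cline quadric_section_def by blast
qed

lemma real_points_quadric_section:
  "{P \<in> quadric_section. jP P = P} = {cline (wedge a (qj a)) | a. a \<noteq> 0 \<and> a \<in> twistor_lift T}"
proof (intro set_eqI iffI)
  fix P assume "P \<in> {P \<in> quadric_section. jP P = P}"
  then obtain \<alpha> where P: "P = cline \<alpha>" and \<alpha>: "\<alpha> \<noteq> 0" "wedge2 \<alpha> \<alpha> = 0"
    "wedge2 \<alpha> (wedge u w) = 0" "wedge2 \<alpha> (wedge (qj u) (qj w)) = 0" and "jP P = P"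
    unfolding quadric_section_def by blast
  have "jhat \<alpha> = 1 *s jhat \<alpha>"
    by simp
  then have "jhat \<alpha> \<in> cline (jhat \<alpha>)"
    unfolding cline_def by blast
  then have "jhat \<alpha> \<in> cline \<alpha>"
    using \<open>jP P = P\<close> by (simp add: P jP_cline)
  then obtain C where "jhat \<alpha> = C *s \<alpha>"
    unfolding cline_def by blast
  then obtain a l where "a \<in> twistor_lift T" "l \<noteq> 0" "\<alpha> = l *s wedge a (qj a)"
    using real_point_is_twistor_fibre[OF \<alpha>] by blast
  moreover have "a \<noteq> 0"
    using \<open>\<alpha> \<noteq> 0\<close> \<open>\<alpha> = l *s wedge a (qj a)\<close> by auto
  ultimately show "P \<in> {cline (wedge a (qj a)) | a. a \<noteq> 0 \<and> a \<in> twistor_lift T}"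
    unfolding P using cline_scale by blast
next
  fix P assume "P \<in> {cline (wedge a (qj a)) | a. a \<noteq> 0 \<and> a \<in> twistor_lift T}"
  then obtain a where P: "P = cline (wedge a (qj a))" and "a \<noteq> 0" "a \<in> twistor_lift T"
    by blast
  then obtain x y where "a = x *s u + y *s w"
    using twistor_lift_iff by blast
  then have \<alpha>: "wedge a (qj a) = frame_wedge 0 (x * cnj x) (x * cnj y) (y * cnj x) (y * cnj y) 0"
    by (simp only: wedge_qj_comb2)
  have "wedge2 (wedge a (qj a)) (wedge a (qj a)) = 0"
    unfolding \<alpha> wedge2_wedge_comb by simp
  moreover have "wedge2 (wedge a (qj a)) (wedge u w) = 0"
    "wedge2 (wedge a (qj a)) (wedge (qj u) (qj w)) = 0"
    unfolding \<alpha> wedge2_wedge_comb_wedge by simp_all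
  moreover have "wedge a (qj a) \<noteq> 0"
    using \<open>a \<noteq> 0\<close> by (simp add: wedge_qj_eq_0_iff)
  ultimately have "P \<in> quadric_section"
    unfolding P quadric_section_def by blast
  moreover have "jP P = P"
    unfolding P jP_cline by (simp add: jhat_wedge_qj)
  ultimately show "P \<in> {P \<in> quadric_section. jP P = P}"
    by blast
qed

lemma line_pt_conj_twistor_lift:
  assumes "\<beta> \<in> line_pt (qj ` twistor_lift T)"
  obtains k where "\<beta> = k *s wedge (qj u) (qj w)"
proof -
  obtain u' w' where \<beta>: "\<beta> = wedge (qj u') (qj w')" and "u' \<in> twistor_lift T" "w' \<in> twistor_lift T"
    using assms unfolding line_pt_def by blast
  then obtain a b c d where "u' = a *s u + b *s w" "w' = c *s u + d *s w"
    using twistor_lift_iff by metis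
  then have "\<beta> = jhat ((a * d - b * c) *s wedge u w)"
    unfolding \<beta> jhat_wedge[symmetric] by (simp only: wedge_comb2)
  also have "\<dots> = cnj (a * d - b * c) *s wedge (qj u) (qj w)"
    by (simp only: jhat_scale jhat_wedge)
  finally show thesis
    by (rule that)
qed

end

theorem mainTheorem18:
  fixes T :: "complex^4^4" and \<sigma> \<sigma>' :: "complex^6"
  assumes quat_lin: "\<forall>v. T *v qj v = qj (T *v v)"
    and sq: "T ** T = - mat 1"
    and rep_S: "\<sigma> \<noteq> 0" "\<sigma> \<in> line_pt (twistor_lift T)"
    and rep_Sj: "\<sigma>' \<noteq> 0" "\<sigma>' \<in> line_pt (qj ` twistor_lift T)"
  defines "Q2S \<equiv> {cline \<alpha> | \<alpha>. \<alpha> \<noteq> 0 \<and> wedge2 \<alpha> \<alpha> = 0 \<and> wedge2 \<alpha> \<sigma> = 0 \<and> wedge2 \<alpha> \<sigma>' = 0}"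
  shows "(\<forall>P \<in> Q2S. jP P \<in> Q2S \<and> jP (jP P) = P)
    \<and> {P \<in> Q2S. jP P = P} = {cline (wedge v (qj v)) | v. v \<noteq> 0 \<and> (\<lambda>x. T *v x) ` hline v = hline v}
    \<and> {P \<in> Q2S. jP P = P} = {cline (wedge a (qj a)) | a. a \<noteq> 0 \<and> a \<in> twistor_lift T}"
proof -
  obtain u w where \<sigma>: "\<sigma> = wedge u w" and "u \<in> twistor_lift T" "w \<in> twistor_lift T"
    using rep_S(2) unfolding line_pt_def by blast
  then interpret twistor_frame T u w
    using quat_lin sq rep_S(1) by unfold_locales (simp_all add: twistor_lift_def)
  obtain k where \<sigma>': "\<sigma>' = k *s wedge (qj u) (qj w)"
    using rep_Sj(2) by (rule line_pt_conj_twistor_lift)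
  with rep_Sj(1) have "k \<noteq> 0"
    by auto
  then have "Q2S = quadric_section"
    unfolding Q2S_def quadric_section_def \<sigma> \<sigma>' by (simp add: wedge2_scale_right)
  then show ?thesis
    using jP_quadric_section real_points_quadric_section invariant_hline_fibres_eq
    by (simp add: jP_jP)
qed

end
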